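(* Let $\mu_\alpha,\mu_\beta$ satisfy Assumption B (see context). Let $\mathcal{E}$ be a compact interval with $\mathrm{supp}(\mu_\alpha\boxplus\mu_\beta)\subset\mathcal{E}$ and $\mathcal{J}:=\{E+i\eta:\ E\in\mathcal{E},\ 0\le\eta\le1\}$. Then there exist constants $C_\alpha,C_\beta>0$ such that $$\inf_{z\in\mathcal{J}}\mathrm{dist}\big(\omega_\alpha(z),\mathrm{supp}(\mu_\beta)\big)\ge C_\alpha,\qquad\inf_{z\in\mathcal{J}}\mathrm{dist}\big(\omega_\beta(z),\mathrm{supp}(\mu_\alpha)\big)\ge C_\beta.$$
   Context: Assumption B: $\mu_\alpha,\mu_\beta$ are absolutely continuous, centered Borel probability measures on $\mathbb{R}$; $\mu_\alpha$ is supported on $n_\alpha\ge1$ disjoint intervals $[A_j^-,A_j^+]$ and $\mu_\beta$ on $n_\beta\ge1$ disjoint intervals $[B_j^-,B_j^+]$; their densities satisfy power laws at the endpoints of each interval with exponents in $(-1,1)$ (e.g. $C^{-1}<\rho_\alpha(x)/\big((x-A_j^-)^{s_j^-}(A_j^+-x)^{s_j^+}\big)<C$ a.e. on $[A_j^-,A_j^+]$, $-1<s_j^\pm<1$; analogously for $\rho_\beta$). $m_\nu(z)=\int\frac{1}{x-z}\nu(dx)$, $F_\nu=-1/m_\nu$. Subordination functions: analytic $\omega_\alpha,\omega_\beta:\mathbb{C}^+\to\mathbb{C}^+$ with $\mathrm{Im}\,\omega_{\alpha},\mathrm{Im}\,\omega_\beta\ge\mathrm{Im}\,z$, $\omega_{\alpha}(i\eta)/(i\eta),\omega_\beta(i\eta)/(i\eta)\to1$,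 and $\omega_\alpha+\omega_\beta-z=F_{\mu_\alpha}\circ\omega_\beta=F_{\mu_\beta}\circ\omega_\alpha$; they extend continuously to $\mathbb{C}^+\cup\mathbb{R}$ with values in $\mathbb{C}^+\cup\mathbb{R}\cup\{\infty\}$. $\mu_\alpha\boxplus\mu_\beta$ has $F_{\mu_\alpha\boxplus\mu_\beta}=F_{\mu_\alpha}\circ\omega_\beta$. *)

theory Defs
  imports "HOL-Probability.Probability"
begin

definition stieltjes :: "real measure \<Rightarrow> complex \<Rightarrow> complex" where
  "stieltjes \<nu> z = (LINT x|\<nu>. 1 / (complex_of_real x - z))"

definition Ftrans :: "real measure \<Rightarrow> complex \<Rightarrow> complex" where
  "Ftrans \<nu> z = - 1 / stieltjes \<nu> z"

definition msupp :: "real measure \<Rightarrow> real set" where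
  "msupp \<nu> = {x. \<forall>e>0. emeasure \<nu> (ball x e) > 0}"

definition assumptionB :: "real measure \<Rightarrow> nat \<Rightarrow> (nat \<Rightarrow> real) \<Rightarrow> (nat \<Rightarrow> real) \<Rightarrow> bool" where
  "assumptionB \<mu> n lo hi \<longleftrightarrow>
     n \<ge> 1 \<and>
     (\<forall>j<n. lo j < hi j) \<and>
     (\<forall>i<n. \<forall>j<n. i \<noteq> j \<longrightarrow> hi i < lo j \<or> hi j < lo i) \<and>
     prob_space \<mu> \<and>
     integral\<^sup>L \<mu> (\<lambda>x. x) = 0 \<and>
     (\<exists>\<rho> C slo shi.
        \<rho> \<in> borel_measurable borel \<and> (\<forall>x. \<rho> x \<ge> 0) \<and>
        \<mu> = density lborel (\<lambda>x. ennreal (\<rho> x)) \<and>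
        (AE x in lborel. (\<forall>j<n. x \<notin> {lo j..hi j}) \<longrightarrow> \<rho> x = 0) \<and>
        C > 0 \<and>
        (\<forall>j<n. -1 < slo j \<and> slo j < 1 \<and> -1 < shi j \<and> shi j < 1) \<and>
        (\<forall>j<n. AE x in lborel. x \<in> {lo j..hi j} \<longrightarrow>
            inverse C < \<rho> x / ((x - lo j) powr slo j * (hi j - x) powr shi j) \<and>
            \<rho> x / ((x - lo j) powr slo j * (hi j - x) powr shi j) < C))"

definition subordination ::
  "real measure \<Rightarrow> real measure \<Rightarrow> (complex \<Rightarrow> complex) \<Rightarrow> (complex \<Rightarrow> complex) \<Rightarrow> bool" where
  "subordination \<mu>a \<mu>b \<omega>a \<omega>b \<longleftrightarrow>
     \<omega>a holomorphic_on {z. Im z > 0} \<and> \<omega>b holomorphic_on {z. Im z > 0} \<and>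
     (\<forall>z. Im z > 0 \<longrightarrow> Im (\<omega>a z) \<ge> Im z \<and> Im (\<omega>b z) \<ge> Im z) \<and>
     ((\<lambda>\<eta>. \<omega>a (\<i> * complex_of_real \<eta>) / (\<i> * complex_of_real \<eta>)) \<longlongrightarrow> 1) at_top \<and>
     ((\<lambda>\<eta>. \<omega>b (\<i> * complex_of_real \<eta>) / (\<i> * complex_of_real \<eta>)) \<longlongrightarrow> 1) at_top \<and>
     (\<forall>z. Im z > 0 \<longrightarrow>
        \<omega>a z + \<omega>b z - z = Ftrans \<mu>a (\<omega>b z) \<and>
        \<omega>a z + \<omega>b z - z = Ftrans \<mu>b (\<omega>a z))"

end

(*
  Write F = omega_a + omega_b - z = F_a(omega_b) = F_b(omega_a), and for a probability measure mu
  and Im w > 0 let I_mu(w) = integral |y - w|^-2 dmu(y) (inv_dist_sq_integral) and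
  K_mu(w) = |F_mu(w)|^2 I_mu(w) - 1 = integral |1 + F_mu(w) / (y - w)|^2 dmu(y) >= 0 (Ftrans_excess).
  Then Im F_mu(w) = Im w (1 + K_mu(w)); comparing with Im F = Im omega_a + Im omega_b - Im z gives
  K_a(omega_b) K_b(omega_a) < 1.  As mu_b is centered, K_b(omega_a) >= Var(mu_b) / (|omega_a| + R_b)^2,
  so Var(mu_b) K_a(omega_b) < (|omega_a| + R_b)^2 <= (|F| + |z| + |omega_b| + R_b)^2.
  If omega_b approached supp mu_a, the power-law lower bound on the density of mu_a (exponents < 1)
  would make I_a(omega_b) arbitrarily large, while |m_a(omega_b)|^2 = o(I_a(omega_b)) because mu_a
  has no atoms; then Var(mu_b) K_a(omega_b) >= 2 |F|^2 + 2 Q^2 >= (|F| + Q)^2 for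
  Q = sup |z| + sup |omega_b| + R_b, a contradiction.  Only the boundedness of z enters.
*)

theory Submission
  imports Defs
begin

definition inv_dist_sq_integral :: "real measure \<Rightarrow> complex \<Rightarrow> real" where
  "inv_dist_sq_integral M w = (\<integral>y. 1 / (cmod (complex_of_real y - w))\<^sup>2 \<partial>M)"

definition Ftrans_excess :: "real measure \<Rightarrow> complex \<Rightarrow> real" where
  "Ftrans_excess M w = (cmod (Ftrans M w))\<^sup>2 * inv_dist_sq_integral M w - 1"

lemma Im_le_cmod_of_real_minus: "Im w \<le> cmod (complex_of_real y - w)"
  using abs_Im_le_cmod[of "complex_of_real y - w"] by simp

lemma cmod_of_real_minus_pos: "Im w > 0 \<Longrightarrow> cmod (complex_of_real y - w) > 0"
  using Im_le_cmod_of_real_minus[of w y] by linarith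

lemma sq_div_le_norm_one_plus_div_sq:
  assumes u: "Im u > 0" and y: "\<bar>y\<bar> \<le> R"
  shows "(y - Re (u - F))\<^sup>2 / (cmod u + R)\<^sup>2 \<le> (cmod (1 + F / (complex_of_real y - u)))\<^sup>2"
proof -
  have d: "0 < cmod (complex_of_real y - u)" "cmod (complex_of_real y - u) \<le> cmod u + R"
    using cmod_of_real_minus_pos[OF u, of y] norm_triangle_ineq4[of "complex_of_real y" u] y by auto
  have "\<bar>y - Re (u - F)\<bar> \<le> cmod (complex_of_real y - (u - F))"
    using abs_Re_le_cmod[of "complex_of_real y - (u - F)"] by simp
  then have "(y - Re (u - F))\<^sup>2 / (cmod u + R)\<^sup>2
      \<le> (cmod (complex_of_real y - (u - F)))\<^sup>2 / (cmod (complex_of_real y - u))\<^sup>2"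
    using d by (intro frac_le) (auto intro: power2_le_iff_abs_le[THEN iffD2] power_mono)
  also have "\<dots> = (cmod (1 + F / (complex_of_real y - u)))\<^sup>2"
    using d by (simp add: field_simps norm_divide power_divide)
  finally show ?thesis .
qed

lemma norm_inverse_of_real_minus_le:
  assumes "\<theta> > 0" "r > 0"
  shows "norm (1 / (complex_of_real y - w))
           \<le> \<theta> / 2 * (1 / (cmod (complex_of_real y - w))\<^sup>2)
             + indicator {Re w - r..Re w + r} y / (2 * \<theta>) + 1 / r"
proof -
  define h where "h = 1 / cmod (complex_of_real y - w)"
  have "0 \<le> (\<theta> * h - 1)\<^sup>2" by simp
  then have "2 * \<theta> * h \<le> \<theta>\<^sup>2 * h\<^sup>2 + 1"
    by (simp add: power2_diff power_mult_distrib algebra_simps)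
  then have near: "h \<le> \<theta> / 2 * h\<^sup>2 + 1 / (2 * \<theta>)"
    using \<open>\<theta> > 0\<close> by (simp add: field_simps power2_eq_square)
  have far: "h < 1 / r" if "y \<notin> {Re w - r..Re w + r}"
  proof -
    have "r < \<bar>Re (complex_of_real y - w)\<bar>" using that by auto
    also have "\<dots> \<le> cmod (complex_of_real y - w)" by (rule abs_Re_le_cmod)
    finally show ?thesis using \<open>r > 0\<close> by (simp add: h_def frac_less2)
  qed
  have pos: "0 < 1 / r" "0 \<le> \<theta> / 2 * h\<^sup>2"
    using assms by auto
  have "h \<le> \<theta> / 2 * h\<^sup>2 + indicator {Re w - r..Re w + r} y / (2 * \<theta>) + 1 / r"
  proof (cases "y \<in> {Re w - r..Re w + r}")
    case True
    then have "indicator {Re w - r..Re w + r} y / (2 * \<theta>) = 1 / (2 * \<theta>)" by simp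
    then show ?thesis using near pos by linarith
  next
    case False
    then have "indicator {Re w - r..Re w + r} y / (2 * \<theta>) = 0" by simp
    then show ?thesis using far[OF False] pos by linarith
  qed
  then show ?thesis
    by (simp add: h_def norm_divide power_divide)
qed

lemma infdist_lessE:
  assumes "infdist x A < e" "A \<noteq> {}"
  obtains a where "a \<in> A" "dist x a < e"
proof -
  have "bdd_below ((\<lambda>a. dist x a) ` A)"
    by (rule bdd_belowI2[of _ 0]) simp
  then show thesis
    using assms that by (auto simp: infdist_notempty cINF_less_iff)
qed

lemma norm_le_if_infdist_of_real_lt:
  assumes "infdist v (complex_of_real ` S) < 1" "S \<noteq> {}" "S \<subseteq> {-R..R}"
  shows "cmod v \<le> \<bar>R\<bar> + 1"
proof -
  obtain x where "x \<in> S" "dist v (complex_of_real x) < 1"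
    using assms(1,2) by (auto elim: infdist_lessE)
  then show ?thesis
    using assms(3) norm_triangle_ineq2[of v "complex_of_real x"] by (force simp: dist_norm)
qed

section \<open>Stieltjes and F-transforms of real distributions\<close>

context real_distribution
begin

lemma integrable_stieltjes_kernel:
  assumes "Im w > 0"
  shows "integrable M (\<lambda>y. 1 / (complex_of_real y - w))"
proof (rule integrable_const_bound[where B = "1 / Im w"])
  show "AE y in M. norm (1 / (complex_of_real y - w)) \<le> 1 / Im w"
    using Im_le_cmod_of_real_minus[of w] assms by (simp add: norm_divide frac_le)
qed simp

lemma integrable_inv_dist_sq:
  assumes "Im w > 0"
  shows "integrable M (\<lambda>y. 1 / (cmod (complex_of_real y - w))\<^sup>2)"
proof (rule integrable_const_bound[where B = "1 / (Im w)\<^sup>2"])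
  have "(Im w)\<^sup>2 \<le> (cmod (complex_of_real y - w))\<^sup>2" for y
    using Im_le_cmod_of_real_minus[of w y] assms by (simp add: power_mono)
  then show "AE y in M. norm (1 / (cmod (complex_of_real y - w))\<^sup>2) \<le> 1 / (Im w)\<^sup>2"
    using assms by (simp add: frac_le)
qed simp

lemma inv_dist_sq_integral_pos:
  assumes "Im w > 0"
  shows "inv_dist_sq_integral M w > 0"
proof -
  have "AE y in M. 0 < 1 / (cmod (complex_of_real y - w))\<^sup>2"
    using cmod_of_real_minus_pos[OF assms] by simp
  then show ?thesis
    unfolding inv_dist_sq_integral_def
    using integral_less_AE_space[OF _ integrable_inv_dist_sq[OF assms], of "\<lambda>_. 0"]
    by (simp add: emeasure_space_1[simplified])
qed

lemma Im_stieltjes: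
  assumes "Im w > 0"
  shows "Im (stieltjes M w) = Im w * inv_dist_sq_integral M w"
proof -
  have "Im (stieltjes M w) = (\<integral>y. Im (1 / (complex_of_real y - w)) \<partial>M)"
    unfolding stieltjes_def by (rule integral_Im[OF integrable_stieltjes_kernel[OF assms], symmetric])
  also have "\<dots> = (\<integral>y. Im w * (1 / (cmod (complex_of_real y - w))\<^sup>2) \<partial>M)"
    by (simp add: Im_divide cmod_power2)
  finally show ?thesis
    unfolding inv_dist_sq_integral_def by (simp add: field_class.field_divide_inverse)
qed

lemma stieltjes_nonzero: "Im w > 0 \<Longrightarrow> stieltjes M w \<noteq> 0"
  using Im_stieltjes inv_dist_sq_integral_pos by fastforce

lemma norm_Ftrans_sq_mult_norm_stieltjes_sq: "Im w > 0 \<Longrightarrow> (cmod (Ftrans M w))\<^sup>2 * (cmod (stieltjes M w))\<^sup>2 = 1"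
  using stieltjes_nonzero by (simp add: Ftrans_def norm_divide power_divide)

lemma Im_Ftrans:
  assumes "Im w > 0"
  shows "Im (Ftrans M w) = Im w * (1 + Ftrans_excess M w)"
proof -
  have "Im (Ftrans M w) = Im (stieltjes M w) * (cmod (Ftrans M w))\<^sup>2"
    by (simp add: Ftrans_def Im_divide cmod_power2 norm_divide power_divide)
  then show ?thesis
    by (simp add: Im_stieltjes[OF assms] Ftrans_excess_def)
qed

lemma integral_norm_one_plus_div_sq:
  assumes "Im w > 0"
  shows "(\<integral>y. (cmod (1 + F / (complex_of_real y - w)))\<^sup>2 \<partial>M)
           = 1 + 2 * Re (F * stieltjes M w) + (cmod F)\<^sup>2 * inv_dist_sq_integral M w"
proof -
  define k where "k = (\<lambda>y. 1 / (complex_of_real y - w))"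
  define q where "q = (\<lambda>y. 1 / (cmod (complex_of_real y - w))\<^sup>2)"
  have k: "integrable M k" and q: "integrable M q"
    unfolding k_def q_def using integrable_stieltjes_kernel integrable_inv_dist_sq assms by auto
  have "(cmod (1 + a))\<^sup>2 = 1 + 2 * Re a + (cmod a)\<^sup>2" for a :: complex
    unfolding cmod_power2 by (simp add: power2_eq_square algebra_simps)
  then have expand: "(cmod (1 + F / (complex_of_real y - w)))\<^sup>2 = 1 + 2 * Re (F * k y) + (cmod F)\<^sup>2 * q y" for y
    by (simp add: k_def q_def norm_mult norm_divide power_divide)
  have "(\<integral>y. 1 + 2 * Re (F * k y) + (cmod F)\<^sup>2 * q y \<partial>M)
      = 1 + 2 * Re (F * integral\<^sup>L M k) + (cmod F)\<^sup>2 * integral\<^sup>L M q"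
    using k q prob_space by (simp add: integral_Re)
  moreover have "integral\<^sup>L M k = stieltjes M w" "integral\<^sup>L M q = inv_dist_sq_integral M w"
    by (simp_all add: k_def q_def stieltjes_def inv_dist_sq_integral_def)
  ultimately show ?thesis
    unfolding expand by simp
qed

lemma Ftrans_excess_eq_integral:
  assumes "Im w > 0"
  shows "Ftrans_excess M w = (\<integral>y. (cmod (1 + Ftrans M w / (complex_of_real y - w)))\<^sup>2 \<partial>M)"
proof -
  have "Ftrans M w * stieltjes M w = -1"
    using stieltjes_nonzero[OF assms] by (simp add: Ftrans_def)
  then show ?thesis
    by (simp add: integral_norm_one_plus_div_sq[OF assms] Ftrans_excess_def)
qed

lemma Ftrans_excess_nonneg: "Im w > 0 \<Longrightarrow> Ftrans_excess M w \<ge> 0"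
  by (simp add: Ftrans_excess_eq_integral)

lemma AE_abs_le_imp_nonneg:
  assumes "AE y in M. \<bar>y\<bar> \<le> R"
  shows "R \<ge> 0"
proof -
  have "AE y in M. 0 \<le> R"
    using assms by eventually_elim simp
  then show ?thesis by simp
qed

lemma integrable_power_if_AE_bounded:
  assumes "AE y in M. \<bar>y\<bar> \<le> R"
  shows "integrable M (\<lambda>y. y ^ k)"
proof (rule integrable_const_bound[where B = "R ^ k"])
  show "AE y in M. norm (y ^ k) \<le> R ^ k"
    using assms by eventually_elim (simp add: power_abs power_mono)
qed simp

lemma integrable_norm_one_plus_div_sq:
  assumes u: "Im u > 0"
  shows "integrable M (\<lambda>y. (cmod (1 + F / (complex_of_real y - u)))\<^sup>2)"
proof (rule integrable_const_bound[where B = "(1 + cmod F / Im u)\<^sup>2"])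
  have "cmod (1 + F / (complex_of_real y - u)) \<le> 1 + cmod F / Im u" for y
    using norm_triangle_ineq[of 1 "F / (complex_of_real y - u)"] Im_le_cmod_of_real_minus[of u y] u
    by (simp add: norm_divide) (smt (verit) frac_le norm_ge_zero)
  then show "AE y in M. norm ((cmod (1 + F / (complex_of_real y - u)))\<^sup>2) \<le> (1 + cmod F / Im u)\<^sup>2"
    by (simp add: power_mono)
qed simp

lemma second_moment_le_integral_norm_one_plus_div_sq:
  assumes bounded: "AE y in M. \<bar>y\<bar> \<le> R" and centered: "expectation (\<lambda>y. y) = 0"
    and u: "Im u > 0"
  shows "expectation (\<lambda>y. y\<^sup>2) / (cmod u + R)\<^sup>2
           \<le> (\<integral>y. (cmod (1 + F / (complex_of_real y - u)))\<^sup>2 \<partial>M)"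
proof -
  have "cmod u + R > 0"
    using AE_abs_le_imp_nonneg[OF bounded] u abs_Im_le_cmod[of u] by linarith
  define c where "c = Re (u - F)"
  \<comment> \<open>as \<open>M\<close> is centered, its second moment about any point \<open>c\<close> is at least the one about \<open>0\<close>\<close>
  have "expectation (\<lambda>y. (y - c)\<^sup>2) = expectation (\<lambda>y. y\<^sup>2) - 2 * c * expectation (\<lambda>y. y) + c\<^sup>2"
    using integrable_power_if_AE_bounded[OF bounded, of 1] integrable_power_if_AE_bounded[OF bounded, of 2]
      prob_space
    by (simp add: power2_diff)
  then have "expectation (\<lambda>y. y\<^sup>2) / (cmod u + R)\<^sup>2 \<le> expectation (\<lambda>y. (y - c)\<^sup>2) / (cmod u + R)\<^sup>2"
    using centered by (simp add: divide_right_mono)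
  also have "\<dots> = expectation (\<lambda>y. (y - c)\<^sup>2 / (cmod u + R)\<^sup>2)"
    by simp
  also have "\<dots> \<le> (\<integral>y. (cmod (1 + F / (complex_of_real y - u)))\<^sup>2 \<partial>M)"
  proof (rule integral_mono_AE)
    show "integrable M (\<lambda>y. (y - c)\<^sup>2 / (cmod u + R)\<^sup>2)"
      using integrable_power_if_AE_bounded[OF bounded, of 1] integrable_power_if_AE_bounded[OF bounded, of 2]
      by (simp add: power2_diff)
    show "AE y in M. (y - c)\<^sup>2 / (cmod u + R)\<^sup>2 \<le> (cmod (1 + F / (complex_of_real y - u)))\<^sup>2"
      using bounded unfolding c_def by eventually_elim (rule sq_div_le_norm_one_plus_div_sq[OF u])
  qed (rule integrable_norm_one_plus_div_sq[OF u])
  finally show ?thesis .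
qed

lemma second_moment_pos:
  assumes atomless: "\<And>t. measure M {t} = 0" and bounded: "AE y in M. \<bar>y\<bar> \<le> R"
  shows "expectation (\<lambda>y. y\<^sup>2) > 0"
proof -
  have "{0} \<in> null_sets M"
    using atomless[of 0] by (simp add: null_sets_def emeasure_eq_measure)
  then have "AE y in M. y \<notin> {0}"
    by (rule AE_not_in)
  then have "AE y in M. 0 < y\<^sup>2"
    by eventually_elim simp
  then show ?thesis
    using integral_less_AE_space[OF _ integrable_power_if_AE_bounded[OF bounded], of "\<lambda>_. 0"]
    by (simp add: emeasure_space_1[simplified])
qed

lemma interval_measure_uniformly_small:
  assumes atomless: "\<And>t. measure M {t} = 0" and bounded: "AE y in M. \<bar>y\<bar> \<le> R"
    and "\<epsilon> > 0"
  obtains r where "r > 0" "\<And>t. measure M {t - r..t + r} \<le> \<epsilon>"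
proof -
  define K where "K = {-\<bar>R\<bar> - 3..\<bar>R\<bar> + 3}"
  have "continuous_on K (cdf M)"
    using isCont_cdf atomless by (intro continuous_at_imp_continuous_on) auto
  then have "uniformly_continuous_on K (cdf M)"
    unfolding K_def by (rule compact_uniformly_continuous) simp
  then obtain d where "d > 0"
    and d: "\<And>x x'. x \<in> K \<Longrightarrow> x' \<in> K \<Longrightarrow> dist x' x < d \<Longrightarrow> dist (cdf M x') (cdf M x) < \<epsilon>"
    unfolding uniformly_continuous_on_def using \<open>\<epsilon> > 0\<close> by metis
  define r where "r = min 1 (d / 4)"
  have "r > 0" "r \<le> 1" "4 * r \<le> d" using \<open>d > 0\<close> by (auto simp: r_def)
  moreover have "measure M {t - r..t + r} \<le> \<epsilon>" for t
  proof (cases "\<bar>t\<bar> \<le> \<bar>R\<bar> + 1")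
    case True
    have "measure M {t - r..t + r} \<le> measure M {t - 2 * r<..t + r}"
      using \<open>r > 0\<close> by (intro finite_measure_mono) auto
    also have "\<dots> = cdf M (t + r) - cdf M (t - 2 * r)"
      using \<open>r > 0\<close> by (intro cdf_diff_eq[symmetric]) simp
    also have "\<dots> < \<epsilon>"
    proof -
      have "t - 2 * r \<in> K" "t + r \<in> K" "dist (t + r) (t - 2 * r) < d"
        using True \<open>r > 0\<close> \<open>r \<le> 1\<close> \<open>4 * r \<le> d\<close> by (auto simp: K_def dist_real_def)
      then show ?thesis
        using d by (fastforce simp: dist_real_def abs_less_iff)
    qed
    finally show ?thesis by simp
  next
    case False
    have "AE y in M. y \<notin> {t - r..t + r}"
      using bounded by eventually_elim (use False in \<open>auto simp: r_def\<close>)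
    then show ?thesis
      using \<open>\<epsilon> > 0\<close> by (simp add: AE_iff_null_sets measure_def null_setsD1)
  qed
  ultimately show thesis using that by blast
qed

lemma norm_stieltjes_sq_le:
  assumes "r > 0" "b > 0" and small: "\<And>t. measure M {t - r..t + r} \<le> b" and w: "Im w > 0"
  shows "(cmod (stieltjes M w))\<^sup>2 \<le> 2 * b * inv_dist_sq_integral M w + 2 / r\<^sup>2"
proof -
  define I where "I = inv_dist_sq_integral M w"
  have "I > 0" unfolding I_def by (rule inv_dist_sq_integral_pos[OF w])
  define \<theta> where "\<theta> = sqrt (b / I)"
  have "\<theta> > 0" using \<open>I > 0\<close> \<open>b > 0\<close> by (simp add: \<theta>_def)
  define S where "S = {Re w - r..Re w + r}"
  define q where "q = (\<lambda>y. 1 / (cmod (complex_of_real y - w))\<^sup>2)"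
  have int_q: "integrable M q" and "integral\<^sup>L M q = I"
    using integrable_inv_dist_sq[OF w] by (simp_all add: q_def I_def inv_dist_sq_integral_def)
  define g where "g = (\<lambda>y. \<theta> / 2 * q y + indicator S y / (2 * \<theta>) + 1 / r)"
  have pointwise: "norm (1 / (complex_of_real y - w)) \<le> g y" for y
    using norm_inverse_of_real_minus_le[OF \<open>\<theta> > 0\<close> \<open>r > 0\<close>] by (simp add: g_def q_def S_def)
  have int_S: "integrable M (indicator S :: real \<Rightarrow> real)"
    by (intro integrable_real_indicator) (simp_all add: S_def less_top[symmetric])
  have int_g: "integrable M g"
    unfolding g_def using int_q int_S
    by (intro Bochner_Integration.integrable_add integrable_mult_right integrable_divide) auto
  have "cmod (stieltjes M w) \<le> integral\<^sup>L M g"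
    unfolding stieltjes_def using pointwise
    by (intro Bochner_Integration.integral_norm_bound_integral integrable_stieltjes_kernel[OF w] int_g)
  also have "integral\<^sup>L M g = \<theta> / 2 * I + measure M S / (2 * \<theta>) + 1 / r"
    using int_q int_S prob_space \<open>integral\<^sup>L M q = I\<close> by (simp add: g_def)
  also have "\<dots> \<le> \<theta> / 2 * I + b / (2 * \<theta>) + 1 / r"
    using small[of "Re w"] \<open>\<theta> > 0\<close> by (simp add: S_def divide_right_mono)
  also have "\<theta> / 2 * I + b / (2 * \<theta>) = sqrt (b * I)"
    using \<open>I > 0\<close> \<open>b > 0\<close> by (simp add: \<theta>_def field_simps real_sqrt_divide real_sqrt_mult)
  finally have "(cmod (stieltjes M w))\<^sup>2 \<le> (sqrt (b * I) + 1 / r)\<^sup>2"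
    by (simp add: power_mono)
  also have "\<dots> \<le> 2 * (sqrt (b * I))\<^sup>2 + 2 * (1 / r)\<^sup>2"
    using zero_le_power2[of "sqrt (b * I) - 1 / r"] by (simp add: power2_diff power2_sum)
  finally show ?thesis
    using \<open>I > 0\<close> \<open>b > 0\<close> by (simp add: I_def power_divide)
qed

lemma Ftrans_excess_dominates:
  assumes atomless: "\<And>t. measure M {t} = 0" and bounded: "AE y in M. \<bar>y\<bar> \<le> R"
    and "\<sigma> > 0"
  obtains N where "\<And>w. Im w > 0 \<Longrightarrow> N \<le> inv_dist_sq_integral M w \<Longrightarrow>
    2 * (cmod (Ftrans M w))\<^sup>2 + 2 * Q\<^sup>2 \<le> \<sigma> * Ftrans_excess M w"
proof -
  define c where "c = \<sigma> + 2 * Q\<^sup>2"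
  have "c > 0" using \<open>\<sigma> > 0\<close> by (simp add: c_def add_pos_nonneg)
  obtain r where "r > 0" and small: "\<And>t. measure M {t - r..t + r} \<le> \<sigma> / (4 * c)"
    using interval_measure_uniformly_small[OF atomless bounded, of "\<sigma> / (4 * c)"] \<open>\<sigma> > 0\<close> \<open>c > 0\<close>
    by auto
  \<comment> \<open>as \<open>|F|\<^sup>2 |m|\<^sup>2 = 1\<close>, the claim reads \<open>\<sigma> I \<ge> 2 + c |m|\<^sup>2\<close>; having no atoms makes \<open>|m|\<^sup>2 = o(I)\<close>\<close>
  show thesis
  proof (rule that)
    fix w assume w: "Im w > 0" and large: "(4 + 4 * c / r\<^sup>2) / \<sigma> \<le> inv_dist_sq_integral M w"
    define I where "I = inv_dist_sq_integral M w"
    define f2 where "f2 = (cmod (Ftrans M w))\<^sup>2"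
    define m2 where "m2 = (cmod (stieltjes M w))\<^sup>2"
    have "f2 * m2 = 1" unfolding f2_def m2_def by (rule norm_Ftrans_sq_mult_norm_stieltjes_sq[OF w])
    have "m2 \<le> 2 * (\<sigma> / (4 * c)) * I + 2 / r\<^sup>2"
      unfolding m2_def I_def using \<open>r > 0\<close> \<open>\<sigma> > 0\<close> \<open>c > 0\<close> small
      by (intro norm_stieltjes_sq_le w) auto
    then have "c * m2 \<le> \<sigma> * I / 2 + 2 * c / r\<^sup>2"
      using \<open>c > 0\<close> by (simp add: field_simps)
    moreover have "4 + 4 * c / r\<^sup>2 \<le> \<sigma> * I"
      using large \<open>\<sigma> > 0\<close> by (simp add: I_def field_simps)
    ultimately have "0 \<le> \<sigma> * I - 2 - c * m2" by simp
    then have "0 \<le> f2 * (\<sigma> * I - 2 - c * m2)"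
      by (simp add: f2_def)
    also have "\<dots> = \<sigma> * f2 * I - 2 * f2 - c * (f2 * m2)"
      by (simp add: algebra_simps)
    also have "\<dots> = \<sigma> * (f2 * I - 1) - (2 * f2 + 2 * Q\<^sup>2)"
      using \<open>f2 * m2 = 1\<close> by (simp add: c_def algebra_simps)
    finally show "2 * (cmod (Ftrans M w))\<^sup>2 + 2 * Q\<^sup>2 \<le> \<sigma> * Ftrans_excess M w"
      by (simp add: Ftrans_excess_def f2_def I_def)
  qed
qed

lemma interval_measure_le_inv_dist_sq_integral:
  assumes w: "Im w > 0" and near: "cmod (w - complex_of_real x0) < r"
  shows "measure M {x0 - r..x0 + r} / (4 * r\<^sup>2) \<le> inv_dist_sq_integral M w"
proof -
  define S where "S = {x0 - r..x0 + r}"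
  have pointwise: "indicator S y / (4 * r\<^sup>2) \<le> 1 / (cmod (complex_of_real y - w))\<^sup>2" for y
  proof (cases "y \<in> S")
    case True
    have "cmod (complex_of_real y - w) \<le> cmod (complex_of_real (y - x0)) + cmod (w - complex_of_real x0)"
      using norm_triangle_ineq4[of "complex_of_real (y - x0)" "w - complex_of_real x0"] by simp
    also have "\<dots> < 2 * r"
      using True near unfolding norm_of_real by (auto simp: S_def)
    finally have "(cmod (complex_of_real y - w))\<^sup>2 \<le> (2 * r)\<^sup>2"
      by (intro power_mono) auto
    then show ?thesis
      using True cmod_of_real_minus_pos[OF w, of y] by (simp add: frac_le power_mult_distrib)
  qed simp
  have "measure M S / (4 * r\<^sup>2) = (\<integral>y. indicator S y / (4 * r\<^sup>2) \<partial>M)"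
    by simp
  also have "\<dots> \<le> inv_dist_sq_integral M w"
    unfolding inv_dist_sq_integral_def using pointwise integrable_inv_dist_sq[OF w]
    by (intro integral_mono integrable_divide integrable_real_indicator)
      (auto simp: S_def less_top[symmetric])
  finally show ?thesis by (simp add: S_def)
qed

lemma inv_dist_sq_integral_large_near:
  assumes "\<kappa> > 0" "p < 2" "r0 > 0"
    and growth: "\<And>x0 r. x0 \<in> X \<Longrightarrow> 0 < r \<Longrightarrow> r \<le> r0 \<Longrightarrow> \<kappa> * r powr p \<le> measure M {x0 - r..x0 + r}"
  obtains \<delta> where "\<delta> > 0"
    "\<And>x0 w. x0 \<in> X \<Longrightarrow> Im w > 0 \<Longrightarrow> cmod (w - complex_of_real x0) < \<delta> \<Longrightarrow> N \<le> inv_dist_sq_integral M w"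
proof -
  define N' where "N' = max N 1"
  define r where "r = min r0 ((\<kappa> / (4 * N')) powr (1 / (2 - p)))"
  have "N' > 0" "r > 0"
    using \<open>\<kappa> > 0\<close> \<open>r0 > 0\<close> by (auto simp: N'_def r_def)
  have "r powr (2 - p) \<le> ((\<kappa> / (4 * N')) powr (1 / (2 - p))) powr (2 - p)"
    using \<open>r > 0\<close> \<open>p < 2\<close> by (intro powr_mono2) (auto simp: r_def)
  also have "\<dots> = \<kappa> / (4 * N')"
    using \<open>\<kappa> > 0\<close> \<open>N' > 0\<close> \<open>p < 2\<close> by (simp add: powr_powr)
  finally have "N' \<le> \<kappa> / (4 * r powr (2 - p))"
    using \<open>r > 0\<close> \<open>N' > 0\<close> \<open>\<kappa> > 0\<close> by (simp add: field_simps)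
  also have "\<dots> = \<kappa> * r powr p / (4 * r\<^sup>2)"
    using \<open>r > 0\<close> by (simp add: powr_diff powr_numeral field_simps)
  finally have N': "N' \<le> \<kappa> * r powr p / (4 * r\<^sup>2)" .
  show thesis
  proof (rule that[OF \<open>r > 0\<close>])
    fix x0 w assume "x0 \<in> X" "Im w > 0" "cmod (w - complex_of_real x0) < r"
    have "\<kappa> * r powr p / (4 * r\<^sup>2) \<le> measure M {x0 - r..x0 + r} / (4 * r\<^sup>2)"
      using growth[OF \<open>x0 \<in> X\<close> \<open>r > 0\<close>] by (simp add: r_def divide_right_mono)
    also have "\<dots> \<le> inv_dist_sq_integral M w"
      by (rule interval_measure_le_inv_dist_sq_integral) fact+
    finally show "N \<le> inv_dist_sq_integral M w"
      using N' by (simp add: N'_def)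
  qed
qed

end

section \<open>Densities with power laws at the endpoints\<close>

lemma powr_lower_bound:
  fixes q x D s t :: real
  assumes "0 < q" "q \<le> x" "x \<le> D" "s \<le> t" "0 \<le> t"
  shows "D powr (s - t) * q powr t \<le> x powr s"
proof -
  have "D powr (s - t) * q powr t \<le> x powr (s - t) * x powr t"
    using assms by (intro mult_mono powr_mono2' powr_mono2) auto
  also have "\<dots> = x powr s"
    by (simp flip: powr_add)
  finally show ?thesis .
qed

lemma powr_mult_powr_lower_bound:
  fixes a b u v D s s' t :: real
  assumes "(a \<le> u \<and> b \<le> v) \<or> (b \<le> u \<and> a \<le> v)" "0 < a" "0 < b" "u \<le> D" "v \<le> D"
    and "s \<le> t" "s' \<le> t" "0 \<le> t"
  shows "D powr (s - t) * D powr (s' - t) * (a * b) powr t \<le> u powr s * v powr s'"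
  using assms(1)
proof (elim disjE conjE)
  assume "a \<le> u" "b \<le> v"
  then have "(D powr (s - t) * a powr t) * (D powr (s' - t) * b powr t) \<le> u powr s * v powr s'"
    using assms by (intro mult_mono powr_lower_bound) auto
  then show ?thesis
    using assms by (simp add: powr_mult mult_ac)
next
  assume "b \<le> u" "a \<le> v"
  then have "(D powr (s - t) * b powr t) * (D powr (s' - t) * a powr t) \<le> u powr s * v powr s'"
    using assms by (intro mult_mono powr_lower_bound) auto
  then show ?thesis
    using assms by (simp add: powr_mult mult_ac)
qed

lemma subinterval_away_from_endpoints:
  fixes lo hi x0 r :: real
  assumes "x0 \<in> {lo..hi}" "0 < r" "r \<le> (hi - lo) / 4"
  obtains p where "{p..p + r / 3} \<subseteq> {x0 - r..x0 + r}"
    "\<And>y. y \<in> {p..p + r / 3} \<Longrightarrow>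
       (r / 3 \<le> y - lo \<and> (hi - lo) / 3 \<le> hi - y) \<or> ((hi - lo) / 3 \<le> y - lo \<and> r / 3 \<le> hi - y)"
proof (cases "x0 \<le> (lo + hi) / 2")
  case True
  show thesis
    by (rule that[of "x0 + r / 3"]) (use True assms in \<open>auto simp: field_simps\<close>)
next
  case False
  show thesis
    by (rule that[of "x0 - 2 * r / 3"]) (use False assms in \<open>auto simp: field_simps\<close>)
qed

lemma emeasure_density_Icc_ge:
  fixes \<rho> :: "real \<Rightarrow> real"
  assumes "\<rho> \<in> borel_measurable borel" "a \<le> b" "c \<ge> 0"
    and lower: "AE x in lborel. x \<in> {a..b} \<longrightarrow> c \<le> \<rho> x"
  shows "ennreal (c * (b - a)) \<le> emeasure (density lborel (\<lambda>x. ennreal (\<rho> x))) {a..b}"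
proof -
  have "ennreal (c * (b - a)) = (\<integral>\<^sup>+ x. ennreal c * indicator {a..b} x \<partial>lborel)"
    using assms by (simp add: nn_integral_cmult_indicator ennreal_mult)
  also have "\<dots> \<le> (\<integral>\<^sup>+ x. ennreal (\<rho> x) * indicator {a..b} x \<partial>lborel)"
    using lower by (intro nn_integral_mono_AE) (auto elim!: eventually_mono simp: indicator_def intro: ennreal_leI)
  also have "\<dots> = emeasure (density lborel (\<lambda>x. ennreal (\<rho> x))) {a..b}"
    using assms by (simp add: emeasure_density)
  finally show ?thesis .
qed

lemma emeasure_power_law_density_interval_ge:
  fixes \<rho> :: "real \<Rightarrow> real"
  assumes "\<rho> \<in> borel_measurable borel" "C > 0" "s \<le> t" "s' \<le> t" "0 \<le> t"
    and power_law: "AE x in lborel. x \<in> {lo..hi} \<longrightarrow>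
                      inverse C < \<rho> x / ((x - lo) powr s * (hi - x) powr s')"
    and x0: "x0 \<in> {lo..hi}" and r: "0 < r" "r \<le> (hi - lo) / 4"
  shows "ennreal ((hi - lo) powr (s - t) * (hi - lo) powr (s' - t) * (r / 3 * ((hi - lo) / 3)) powr t / C * (r / 3))
           \<le> emeasure (density lborel (\<lambda>x. ennreal (\<rho> x))) {x0 - r..x0 + r}"
proof -
  define D where "D = hi - lo"
  have "D > 0" using x0 r by (simp add: D_def)
  \<comment> \<open>staying \<open>D / 3\<close> away from one endpoint keeps the exponent at \<open>1 + t\<close> rather than \<open>1 + 2 t\<close>\<close>
  obtain p where sub: "{p..p + r / 3} \<subseteq> {x0 - r..x0 + r}"
    and position: "\<And>y. y \<in> {p..p + r / 3} \<Longrightarrow>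
       (r / 3 \<le> y - lo \<and> D / 3 \<le> hi - y) \<or> (D / 3 \<le> y - lo \<and> r / 3 \<le> hi - y)"
    using subinterval_away_from_endpoints[OF x0 r] by (auto simp: D_def)
  define c where "c = D powr (s - t) * D powr (s' - t) * (r / 3 * (D / 3)) powr t / C"
  have "AE x in lborel. x \<in> {p..p + r / 3} \<longrightarrow> c \<le> \<rho> x"
    using power_law
  proof (eventually_elim, intro impI)
    case (elim x)
    assume "x \<in> {p..p + r / 3}"
    note position = position[OF this]
    have "0 < x - lo" "0 < hi - x" "x - lo \<le> D" "hi - x \<le> D"
      using position r \<open>D > 0\<close> by (auto simp: D_def)
    have "c * C = D powr (s - t) * D powr (s' - t) * (r / 3 * (D / 3)) powr t"
      using \<open>C > 0\<close> by (simp add: c_def)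
    also have "\<dots> \<le> (x - lo) powr s * (hi - x) powr s'"
      by (rule powr_mult_powr_lower_bound) (use assms position \<open>D > 0\<close> \<open>x - lo \<le> D\<close> \<open>hi - x \<le> D\<close> in auto)
    also have "\<dots> < \<rho> x * C"
      using elim \<open>0 < x - lo\<close> \<open>0 < hi - x\<close> \<open>C > 0\<close> by (simp add: D_def field_simps)
    finally show "c \<le> \<rho> x"
      using \<open>C > 0\<close> by simp
  qed
  then have "ennreal (c * (r / 3)) \<le> emeasure (density lborel (\<lambda>x. ennreal (\<rho> x))) {p..p + r / 3}"
    using emeasure_density_Icc_ge[OF \<open>\<rho> \<in> borel_measurable borel\<close>, of p "p + r / 3" c]
      r \<open>D > 0\<close> \<open>C > 0\<close> by (simp add: c_def)
  also have "\<dots> \<le> emeasure (density lborel (\<lambda>x. ennreal (\<rho> x))) {x0 - r..x0 + r}"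
    using sub by (intro emeasure_mono) auto
  finally show ?thesis
    by (simp add: c_def D_def)
qed

lemma power_law_density_interval_growth:
  fixes \<rho> :: "real \<Rightarrow> real"
  assumes "lo < hi" "\<rho> \<in> borel_measurable borel" "C > 0"
    and power_law: "AE x in lborel. x \<in> {lo..hi} \<longrightarrow>
                      inverse C < \<rho> x / ((x - lo) powr s * (hi - x) powr s')"
  obtains \<kappa> where "\<kappa> > 0"
    "\<And>x0 r. x0 \<in> {lo..hi} \<Longrightarrow> 0 < r \<Longrightarrow> r \<le> (hi - lo) / 4 \<Longrightarrow>
       ennreal (\<kappa> * r powr (1 + max 0 (max s s'))) \<le> emeasure (density lborel (\<lambda>x. ennreal (\<rho> x))) {x0 - r..x0 + r}"
proof -
  define t where "t = max 0 (max s s')"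
  define D where "D = hi - lo"
  have "D > 0" using \<open>lo < hi\<close> by (simp add: D_def)
  define \<kappa> where "\<kappa> = D powr (s - t) * D powr (s' - t) * (D / 3) powr t / (C * 3 powr (1 + t))"
  have "\<kappa> > 0" using \<open>D > 0\<close> \<open>C > 0\<close> by (simp add: \<kappa>_def)
  moreover have "\<kappa> * r powr (1 + t) = D powr (s - t) * D powr (s' - t) * (r / 3 * (D / 3)) powr t / C * (r / 3)"
    if "r > 0" for r
    using that \<open>D > 0\<close> \<open>C > 0\<close> powr_mult[of 3 3 t]
    by (simp add: \<kappa>_def powr_mult powr_add powr_divide field_simps)
  ultimately show thesis
    using that emeasure_power_law_density_interval_ge[OF assms(2,3) _ _ _ power_law, of t]
    by (simp add: t_def D_def)
qed

section \<open>Measures satisfying Assumption B\<close>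

lemma assumptionB_real_distribution:
  assumes "assumptionB \<mu> n lo hi"
  shows "real_distribution \<mu>"
proof -
  obtain \<rho> where "\<mu> = density lborel (\<lambda>x. ennreal (\<rho> x))" and "prob_space \<mu>"
    using assms unfolding assumptionB_def by blast
  then show ?thesis
    by (simp add: real_distribution_def real_distribution_axioms_def)
qed

lemma assumptionB_AE_in_intervals:
  assumes "assumptionB \<mu> n lo hi"
  shows "AE x in \<mu>. x \<in> (\<Union>j<n. {lo j..hi j})"
proof -
  obtain \<rho> where "\<rho> \<in> borel_measurable borel" and \<mu>: "\<mu> = density lborel (\<lambda>x. ennreal (\<rho> x))"
    and outside: "AE x in lborel. (\<forall>j<n. x \<notin> {lo j..hi j}) \<longrightarrow> \<rho> x = 0"
    using assms unfolding assumptionB_def by blast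
  then have "AE x in lborel. 0 < \<rho> x \<longrightarrow> x \<in> (\<Union>j<n. {lo j..hi j})"
    by (auto elim!: eventually_mono)
  then show ?thesis
    unfolding \<mu> using \<open>\<rho> \<in> borel_measurable borel\<close> by (simp add: AE_density)
qed

lemma msupp_subset_intervals:
  assumes B: "assumptionB \<mu> n lo hi"
  shows "msupp \<mu> \<subseteq> (\<Union>j<n. {lo j..hi j})"
proof
  fix x assume x: "x \<in> msupp \<mu>"
  interpret real_distribution \<mu> by (rule assumptionB_real_distribution[OF B])
  define U where "U = (\<Union>j<n. {lo j..hi j})"
  show "x \<in> U"
  proof (rule ccontr)
    assume "x \<notin> U"
    moreover have "open (- U)"
      by (auto simp: U_def intro: closed_UN)
    ultimately obtain e where "e > 0" "ball x e \<subseteq> - U"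
      using open_contains_ball by blast
    then have "AE y in \<mu>. y \<notin> ball x e"
      using assumptionB_AE_in_intervals[OF B] by (auto simp: U_def elim!: eventually_mono)
    then have "emeasure \<mu> (ball x e) = 0"
      by (simp add: AE_iff_null_sets null_setsD1)
    with x \<open>e > 0\<close> show False
      by (auto simp: msupp_def)
  qed
qed

lemma assumptionB_bounded:
  assumes B: "assumptionB \<mu> n lo hi"
  obtains R where "AE y in \<mu>. \<bar>y\<bar> \<le> R" "msupp \<mu> \<subseteq> {-R..R}"
proof -
  have "bounded (\<Union>j<n. {lo j..hi j})"
    by (intro compact_imp_bounded compact_UN) auto
  then obtain R where R: "\<And>j x. j < n \<Longrightarrow> lo j \<le> x \<Longrightarrow> x \<le> hi j \<Longrightarrow> \<bar>x\<bar> \<le> R"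
    unfolding bounded_real by fastforce
  show thesis
  proof
    show "AE y in \<mu>. \<bar>y\<bar> \<le> R"
      using assumptionB_AE_in_intervals[OF B] by (auto elim!: eventually_mono intro: R)
    show "msupp \<mu> \<subseteq> {-R..R}"
      using msupp_subset_intervals[OF B] R by (fastforce simp: abs_le_iff)
  qed
qed

lemma assumptionB_atomless:
  assumes "assumptionB \<mu> n lo hi"
  shows "measure \<mu> {t} = 0"
proof -
  obtain \<rho> where "\<rho> \<in> borel_measurable borel" and \<mu>: "\<mu> = density lborel (\<lambda>x. ennreal (\<rho> x))"
    using assms unfolding assumptionB_def by blast
  have "AE x in lborel. x \<in> {t} \<longrightarrow> ennreal (\<rho> x) = 0"
    using AE_lborel_singleton[of t] by eventually_elim simp
  then have "{t} \<in> null_sets \<mu>"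
    unfolding \<mu> using \<open>\<rho> \<in> borel_measurable borel\<close> by (simp add: null_sets_density_iff)
  then show ?thesis
    by (simp add: measure_def null_setsD1)
qed

lemma assumptionB_interval_growth:
  assumes B: "assumptionB \<mu> n lo hi" and "j < n"
  obtains \<kappa> p where "\<kappa> > 0" "p < 2"
    "\<And>x0 r. x0 \<in> {lo j..hi j} \<Longrightarrow> 0 < r \<Longrightarrow> r \<le> (hi j - lo j) / 4 \<Longrightarrow>
       \<kappa> * r powr p \<le> measure \<mu> {x0 - r..x0 + r}"
proof -
  interpret real_distribution \<mu> by (rule assumptionB_real_distribution[OF B])
  obtain \<rho> C s s' where "\<rho> \<in> borel_measurable borel" and \<mu>: "\<mu> = density lborel (\<lambda>x. ennreal (\<rho> x))"
    and "C > 0" and exponents: "\<forall>j<n. -1 < s j \<and> s j < 1 \<and> -1 < s' j \<and> s' j < 1"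
    and intervals: "\<forall>j<n. lo j < hi j"
    and two_sided: "\<forall>j<n. AE x in lborel. x \<in> {lo j..hi j} \<longrightarrow>
        inverse C < \<rho> x / ((x - lo j) powr s j * (hi j - x) powr s' j) \<and>
        \<rho> x / ((x - lo j) powr s j * (hi j - x) powr s' j) < C"
    using B unfolding assumptionB_def by blast
  have power_law: "AE x in lborel. x \<in> {lo j..hi j} \<longrightarrow>
                      inverse C < \<rho> x / ((x - lo j) powr s j * (hi j - x) powr s' j)"
    using two_sided \<open>j < n\<close> by (auto elim: eventually_mono)
  have "s j < 1" "s' j < 1" "lo j < hi j"
    using exponents intervals \<open>j < n\<close> by auto
  obtain \<kappa> where "\<kappa> > 0" and growth:
    "\<And>x0 r. x0 \<in> {lo j..hi j} \<Longrightarrow> 0 < r \<Longrightarrow> r \<le> (hi j - lo j) / 4 \<Longrightarrow>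
       ennreal (\<kappa> * r powr (1 + max 0 (max (s j) (s' j)))) \<le> emeasure \<mu> {x0 - r..x0 + r}"
    unfolding \<mu> using power_law_density_interval_growth[OF \<open>lo j < hi j\<close> \<open>\<rho> \<in> borel_measurable borel\<close> \<open>C > 0\<close> power_law]
    by blast
  show thesis
  proof (rule that[OF \<open>\<kappa> > 0\<close>])
    show "1 + max 0 (max (s j) (s' j)) < 2"
      using \<open>s j < 1\<close> \<open>s' j < 1\<close> by simp
    show "\<kappa> * r powr (1 + max 0 (max (s j) (s' j))) \<le> measure \<mu> {x0 - r..x0 + r}"
      if "x0 \<in> {lo j..hi j}" "0 < r" "r \<le> (hi j - lo j) / 4" for x0 r
      using growth[OF that] by (simp add: emeasure_eq_measure)
  qed
qed

lemma assumptionB_msupp_nonempty: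
  assumes B: "assumptionB \<mu> n lo hi"
  shows "msupp \<mu> \<noteq> {}"
proof -
  interpret real_distribution \<mu> by (rule assumptionB_real_distribution[OF B])
  have "0 < n" "lo 0 < hi 0"
    using B by (auto simp: assumptionB_def)
  then obtain \<kappa> p where "\<kappa> > 0" and growth:
    "\<And>r. 0 < r \<Longrightarrow> r \<le> (hi 0 - lo 0) / 4 \<Longrightarrow> \<kappa> * r powr p \<le> measure \<mu> {lo 0 - r..lo 0 + r}"
    using assumptionB_interval_growth[OF B \<open>0 < n\<close>] by (metis atLeastAtMost_iff order_refl less_imp_le)
  have "emeasure \<mu> (ball (lo 0) e) > 0" if "e > 0" for e
  proof -
    define r where "r = min (e / 2) ((hi 0 - lo 0) / 4)"
    have "r > 0" using \<open>e > 0\<close> \<open>lo 0 < hi 0\<close> by (simp add: r_def)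
    have "0 < \<kappa> * r powr p" using \<open>\<kappa> > 0\<close> \<open>r > 0\<close> by simp
    also have "\<dots> \<le> measure \<mu> {lo 0 - r..lo 0 + r}"
      by (rule growth[OF \<open>r > 0\<close>]) (simp add: r_def min_def)
    also have "\<dots> \<le> measure \<mu> (ball (lo 0) e)"
      using \<open>r > 0\<close> \<open>e > 0\<close> by (intro finite_measure_mono) (auto simp: r_def dist_real_def)
    finally show ?thesis by (simp add: emeasure_eq_measure)
  qed
  then have "lo 0 \<in> msupp \<mu>"
    by (simp add: msupp_def)
  then show ?thesis by blast
qed

lemma inv_dist_sq_integral_large_near_msupp:
  assumes B: "assumptionB \<mu> n lo hi"
  obtains \<delta> where "\<delta> > 0"
    "\<And>w. Im w > 0 \<Longrightarrow> infdist w (complex_of_real ` msupp \<mu>) < \<delta> \<Longrightarrow> N \<le> inv_dist_sq_integral \<mu> w"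
proof -
  interpret real_distribution \<mu> by (rule assumptionB_real_distribution[OF B])
  let ?near = "\<lambda>j \<delta>. \<forall>x0\<in>{lo j..hi j}. \<forall>w. Im w > 0 \<longrightarrow> cmod (w - complex_of_real x0) < \<delta> \<longrightarrow>
                  N \<le> inv_dist_sq_integral \<mu> w"
  have "\<forall>j\<in>{..<n}. \<forall>\<^sub>F \<delta> in at_right 0. ?near j \<delta>"
  proof
    fix j assume "j \<in> {..<n}"
    then have "lo j < hi j"
      using B by (simp add: assumptionB_def)
    obtain \<kappa> p where "\<kappa> > 0" "p < 2" and growth:
      "\<And>x0 r. x0 \<in> {lo j..hi j} \<Longrightarrow> 0 < r \<Longrightarrow> r \<le> (hi j - lo j) / 4 \<Longrightarrow>
         \<kappa> * r powr p \<le> measure \<mu> {x0 - r..x0 + r}"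
      using assumptionB_interval_growth[OF B] \<open>j \<in> {..<n}\<close> by blast
    have r0: "(hi j - lo j) / 4 > 0"
      using \<open>lo j < hi j\<close> by simp
    obtain \<delta> where "\<delta> > 0" and near: "\<And>x0 w. x0 \<in> {lo j..hi j} \<Longrightarrow> Im w > 0 \<Longrightarrow>
        cmod (w - complex_of_real x0) < \<delta> \<Longrightarrow> N \<le> inv_dist_sq_integral \<mu> w"
      using inv_dist_sq_integral_large_near[where N = N, OF \<open>\<kappa> > 0\<close> \<open>p < 2\<close> r0 growth] by metis
    show "\<forall>\<^sub>F \<delta> in at_right 0. ?near j \<delta>"
      unfolding eventually_at_right_field using \<open>\<delta> > 0\<close> near by force
  qed
  then have "\<forall>\<^sub>F \<delta> in at_right 0. \<forall>j\<in>{..<n}. ?near j \<delta>"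
    by (intro eventually_ball_finite) auto
  then obtain \<delta> where "\<delta> > 0" and near: "\<forall>j\<in>{..<n}. ?near j \<delta>"
    unfolding eventually_at_right_field by (metis field_lbound_gt_zero less_numeral_extra(1))
  show thesis
  proof (rule that[OF \<open>\<delta> > 0\<close>])
    fix w assume "Im w > 0" "infdist w (complex_of_real ` msupp \<mu>) < \<delta>"
    then obtain x0 where "x0 \<in> msupp \<mu>" "dist w (complex_of_real x0) < \<delta>"
      using assumptionB_msupp_nonempty[OF B] by (auto elim: infdist_lessE)
    moreover from \<open>x0 \<in> msupp \<mu>\<close> obtain j where "j < n" "x0 \<in> {lo j..hi j}"
      using msupp_subset_intervals[OF B] by blast
    ultimately show "N \<le> inv_dist_sq_integral \<mu> w"
      using near \<open>Im w > 0\<close> by (auto simp: dist_norm)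
  qed
qed

lemma Ftrans_excess_large_near_msupp:
  assumes B: "assumptionB \<mu> n lo hi" and "\<sigma> > 0"
  obtains \<delta> where "\<delta> > 0"
    "\<And>w. Im w > 0 \<Longrightarrow> infdist w (complex_of_real ` msupp \<mu>) < \<delta> \<Longrightarrow>
       2 * (cmod (Ftrans \<mu> w))\<^sup>2 + 2 * Q\<^sup>2 \<le> \<sigma> * Ftrans_excess \<mu> w"
proof -
  interpret real_distribution \<mu> by (rule assumptionB_real_distribution[OF B])
  obtain R where bounded: "AE y in \<mu>. \<bar>y\<bar> \<le> R"
    by (rule assumptionB_bounded[OF B])
  obtain N where dominated: "\<And>w. Im w > 0 \<Longrightarrow> N \<le> inv_dist_sq_integral \<mu> w \<Longrightarrow>
      2 * (cmod (Ftrans \<mu> w))\<^sup>2 + 2 * Q\<^sup>2 \<le> \<sigma> * Ftrans_excess \<mu> w"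
    using Ftrans_excess_dominates[OF assumptionB_atomless[OF B] bounded \<open>\<sigma> > 0\<close>] by blast
  obtain \<delta> where "\<delta> > 0" and near: "\<And>w. Im w > 0 \<Longrightarrow> infdist w (complex_of_real ` msupp \<mu>) < \<delta> \<Longrightarrow>
      N \<le> inv_dist_sq_integral \<mu> w"
    using inv_dist_sq_integral_large_near_msupp[where N = N, OF B] by metis
  show thesis
    using that[OF \<open>\<delta> > 0\<close>] dominated near by blast
qed

section \<open>Subordination functions stay away from the supports\<close>

lemma subordination_excess_product_lt_one:
  fixes \<eta> a b Ka Kb :: real
  assumes "\<eta> > 0" "a > 0" "Ka \<ge> 0"
    and "a + b - \<eta> = b * (1 + Ka)" "a + b - \<eta> = a * (1 + Kb)"
  shows "Ka * Kb < 1"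
proof (rule ccontr)
  assume "\<not> Ka * Kb < 1"
  have "a - \<eta> = (\<eta> + a * Kb) * Ka"
    using assms(4,5) by (simp add: algebra_simps)
  also have "\<dots> = \<eta> * Ka + a * (Ka * Kb)"
    by (simp add: algebra_simps)
  also have "\<dots> \<ge> a"
  proof -
    have "a \<le> a * (Ka * Kb)"
      using \<open>\<not> Ka * Kb < 1\<close> \<open>a > 0\<close> by (simp add: mult_le_cancel_left1)
    moreover have "0 \<le> \<eta> * Ka"
      using assms(1,3) by simp
    ultimately show ?thesis by linarith
  qed
  finally show False
    using \<open>\<eta> > 0\<close> by simp
qed

lemma subordination_excess_bound:
  assumes "real_distribution Ma" "real_distribution Mb"
    and bounded: "AE y in Mb. \<bar>y\<bar> \<le> R" and centered: "integral\<^sup>L Mb (\<lambda>y. y) = 0"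
    and z: "Im z > 0" "Im z \<le> Im u" "Im z \<le> Im w"
    and F: "u + w - z = Ftrans Ma w" "u + w - z = Ftrans Mb u"
  shows "(\<integral>y. y\<^sup>2 \<partial>Mb) * Ftrans_excess Ma w < (cmod u + R)\<^sup>2"
proof -
  interpret A: real_distribution Ma by fact
  interpret B: real_distribution Mb by fact
  have "Im u > 0" "Im w > 0"
    using z by auto
  define Ka where "Ka = Ftrans_excess Ma w"
  define Kb where "Kb = Ftrans_excess Mb u"
  have "Ka \<ge> 0"
    unfolding Ka_def by (rule A.Ftrans_excess_nonneg[OF \<open>Im w > 0\<close>])
  have ImF: "Im u + Im w - Im z = Im (u + w - z)"
    by simp
  have "Ka * Kb < 1"
  proof (rule subordination_excess_product_lt_one)
    show "Im u + Im w - Im z = Im w * (1 + Ka)"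
      unfolding ImF F(1) Ka_def by (rule A.Im_Ftrans[OF \<open>Im w > 0\<close>])
    show "Im u + Im w - Im z = Im u * (1 + Kb)"
      unfolding ImF F(2) Kb_def by (rule B.Im_Ftrans[OF \<open>Im u > 0\<close>])
  qed fact+
  have "cmod u + R > 0"
    using B.AE_abs_le_imp_nonneg[OF bounded] \<open>Im u > 0\<close> abs_Im_le_cmod[of u] by linarith
  have "(\<integral>y. y\<^sup>2 \<partial>Mb) / (cmod u + R)\<^sup>2 \<le> Kb"
    unfolding Kb_def B.Ftrans_excess_eq_integral[OF \<open>Im u > 0\<close>]
    by (rule B.second_moment_le_integral_norm_one_plus_div_sq[OF bounded centered \<open>Im u > 0\<close>])
  then have "(\<integral>y. y\<^sup>2 \<partial>Mb) * Ka \<le> (cmod u + R)\<^sup>2 * (Ka * Kb)"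
    using \<open>cmod u + R > 0\<close> \<open>Ka \<ge> 0\<close> mult_right_mono[of _ _ Ka]
    by (fastforce simp: divide_le_eq mult_ac)
  also have "\<dots> < (cmod u + R)\<^sup>2"
    using \<open>Ka * Kb < 1\<close> \<open>cmod u + R > 0\<close> by simp
  finally show ?thesis
    by (simp add: Ka_def)
qed

lemma subordination_dist_msupp_pos:
  fixes u w :: "complex \<Rightarrow> complex"
  assumes Ba: "assumptionB Ma na Alo Ahi" and Bb: "assumptionB Mb nb Blo Bhi"
    and sub: "\<And>z. Im z > 0 \<Longrightarrow> Im z \<le> Im (u z) \<and> Im z \<le> Im (w z) \<and>
                 u z + w z - z = Ftrans Ma (w z) \<and> u z + w z - z = Ftrans Mb (u z)"
  obtains c where "c > 0"
    "\<And>z. Im z > 0 \<Longrightarrow> cmod z \<le> Z \<Longrightarrow> c \<le> infdist (w z) (complex_of_real ` msupp Ma)"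
proof -
  interpret B: real_distribution Mb by (rule assumptionB_real_distribution[OF Bb])
  obtain Ra where supp_a: "msupp Ma \<subseteq> {-Ra..Ra}"
    using assumptionB_bounded[OF Ba] by metis
  obtain Rb where bounded_b: "AE y in Mb. \<bar>y\<bar> \<le> Rb"
    by (rule assumptionB_bounded[OF Bb])
  have centered_b: "B.expectation (\<lambda>y. y) = 0"
    using Bb by (simp add: assumptionB_def)
  define \<sigma> where "\<sigma> = B.expectation (\<lambda>y. y\<^sup>2)"
  have "\<sigma> > 0"
    unfolding \<sigma>_def by (rule B.second_moment_pos[OF assumptionB_atomless[OF Bb] bounded_b])
  define Q where "Q = Z + \<bar>Ra\<bar> + 1 + Rb"
  obtain \<delta> where "\<delta> > 0" and large: "\<And>v. Im v > 0 \<Longrightarrow> infdist v (complex_of_real ` msupp Ma) < \<delta> \<Longrightarrow>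
      2 * (cmod (Ftrans Ma v))\<^sup>2 + 2 * Q\<^sup>2 \<le> \<sigma> * Ftrans_excess Ma v"
    using Ftrans_excess_large_near_msupp[OF Ba \<open>\<sigma> > 0\<close>, of Q] by metis
  show thesis
  proof (rule that[of "min \<delta> 1"])
    show "min \<delta> 1 > 0" using \<open>\<delta> > 0\<close> by simp
    fix z assume "Im z > 0" "cmod z \<le> Z"
    show "min \<delta> 1 \<le> infdist (w z) (complex_of_real ` msupp Ma)"
    proof (rule ccontr)
      assume "\<not> ?thesis"
      then have close: "infdist (w z) (complex_of_real ` msupp Ma) < \<delta>"
        "infdist (w z) (complex_of_real ` msupp Ma) < 1" by auto
      define F where "F = u z + w z - z"
      have "Im (w z) > 0" and F: "F = Ftrans Ma (w z)" "F = Ftrans Mb (u z)"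
        using sub[OF \<open>Im z > 0\<close>] \<open>Im z > 0\<close> by (auto simp: F_def)
      have "cmod (w z) \<le> \<bar>Ra\<bar> + 1"
        using close(2) assumptionB_msupp_nonempty[OF Ba] supp_a by (rule norm_le_if_infdist_of_real_lt)
      then have "cmod (u z) + Rb \<le> cmod F + Q"
        using norm_triangle_ineq4[of "F + z" "w z"] norm_triangle_ineq[of F z] \<open>cmod z \<le> Z\<close>
        by (simp add: F_def Q_def)
      then have "(cmod (u z) + Rb)\<^sup>2 \<le> (cmod F + Q)\<^sup>2"
        using B.AE_abs_le_imp_nonneg[OF bounded_b] by (intro power_mono) auto
      also have "\<dots> \<le> 2 * (cmod F)\<^sup>2 + 2 * Q\<^sup>2"
        using zero_le_power2[of "cmod F - Q"] by (simp add: power2_diff power2_sum)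
      also have "\<dots> \<le> \<sigma> * Ftrans_excess Ma (w z)"
        unfolding F by (rule large[OF \<open>Im (w z) > 0\<close> close(1)])
      also have "\<dots> < (cmod (u z) + Rb)\<^sup>2"
        unfolding \<sigma>_def using sub[OF \<open>Im z > 0\<close>] \<open>Im z > 0\<close>
        by (intro subordination_excess_bound[OF assumptionB_real_distribution[OF Ba] assumptionB_real_distribution[OF Bb]
              bounded_b centered_b]) auto
      finally show False by simp
    qed
  qed
qed

theorem lemma4p6:
  fixes \<mu>a \<mu>b \<nu> :: "real measure"
    and na nb :: nat and Alo Ahi Blo Bhi :: "nat \<Rightarrow> real"
    and \<omega>a \<omega>b :: "complex \<Rightarrow> complex"
    and a b :: real
  assumes "assumptionB \<mu>a na Alo Ahi"
    and "assumptionB \<mu>b nb Blo Bhi"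
    and "subordination \<mu>a \<mu>b \<omega>a \<omega>b"
    and "prob_space \<nu>" and "sets \<nu> = sets borel"
    and "\<forall>z. Im z > 0 \<longrightarrow> Ftrans \<nu> z = Ftrans \<mu>a (\<omega>b z)"
    and "a \<le> b"
    and "msupp \<nu> \<subseteq> {a..b}"
  shows "\<exists>Ca>0. \<exists>Cb>0. \<forall>z. Re z \<in> {a..b} \<and> 0 < Im z \<and> Im z \<le> 1 \<longrightarrow>
            infdist (\<omega>a z) (complex_of_real ` msupp \<mu>b) \<ge> Ca \<and>
            infdist (\<omega>b z) (complex_of_real ` msupp \<mu>a) \<ge> Cb"
proof -
  have sub: "\<And>z. Im z > 0 \<Longrightarrow> Im z \<le> Im (\<omega>a z) \<and> Im z \<le> Im (\<omega>b z) \<and>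
      \<omega>a z + \<omega>b z - z = Ftrans \<mu>a (\<omega>b z) \<and> \<omega>a z + \<omega>b z - z = Ftrans \<mu>b (\<omega>a z)"
    using assms(3) unfolding subordination_def by blast
  then have sub': "\<And>z. Im z > 0 \<Longrightarrow> Im z \<le> Im (\<omega>b z) \<and> Im z \<le> Im (\<omega>a z) \<and>
      \<omega>b z + \<omega>a z - z = Ftrans \<mu>b (\<omega>a z) \<and> \<omega>b z + \<omega>a z - z = Ftrans \<mu>a (\<omega>b z)"
    by (metis add.commute)
  define Z where "Z = \<bar>a\<bar> + \<bar>b\<bar> + 1"
  have bounded: "cmod z \<le> Z" if "Re z \<in> {a..b}" "0 < Im z" "Im z \<le> 1" for z
    using cmod_le[of z] that by (auto simp: Z_def)
  obtain Cb where "Cb > 0"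
    and Cb: "\<And>z. Im z > 0 \<Longrightarrow> cmod z \<le> Z \<Longrightarrow> Cb \<le> infdist (\<omega>b z) (complex_of_real ` msupp \<mu>a)"
    using subordination_dist_msupp_pos[where Z = Z, OF assms(1,2) sub] by metis
  obtain Ca where "Ca > 0"
    and Ca: "\<And>z. Im z > 0 \<Longrightarrow> cmod z \<le> Z \<Longrightarrow> Ca \<le> infdist (\<omega>a z) (complex_of_real ` msupp \<mu>b)"
    using subordination_dist_msupp_pos[where Z = Z, OF assms(2,1) sub'] by metis
  show ?thesis
    using \<open>Ca > 0\<close> \<open>Cb > 0\<close> Ca Cb bounded by blast
qed

end
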